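(* Let $d\ge1$. As a function of $B\in(1,\infty)$, $\lambda_d(B)$ is continuous and decreasing, and $$\lim_{B\to1}\lambda_d(B)=1,\qquad \lim_{B\to\infty}\lambda_d(B)=\frac12.$$ In particular $\lambda_d(B)\ge\frac12$ for all $B>1$.
   Context: Gauss map $T(x)=1/x-\lfloor1/x\rfloor$ ($T(0)=0$). Pressure: $\mathsf P(T,\phi)=\lim_{n\to\infty}\frac1n\log\sum_{(a_1,\dots,a_n)\in\mathbb N^n}\sup_{x\in[0,1)}e^{S_n\phi([a_1,\dots,a_n+x])}$, $S_n\phi=\sum_{i=0}^{n-1}\phi\circ T^i$, where $[a_1,\dots,a_n+x]$ is the finite continued fraction with last entry $a_n+x$. Functions $g_1(s)=s$, $g_n(s)=\frac{s g_{n-1}(s)}{1-s+ng_{n-1}(s)}$ ($n\ge2$). For $B>1$, $\lambda_d(B)=\inf\{s\ge0:\mathsf P(T,-s\log|T'(x)|-g_d(s)\log B)\le0\}$. *)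

theory Defs
  imports "HOL-Analysis.Analysis"
begin

definition gauss_map :: "real \<Rightarrow> real" where
  "gauss_map x = (if x = 0 then 0 else 1 / x - of_int \<lfloor>1 / x\<rfloor>)"

definition abs_gauss_deriv :: "real \<Rightarrow> real" where
  "abs_gauss_deriv x = 1 / x\<^sup>2"

text \<open>Finite continued fraction: cf [a1,...,an] x = [a1,...,an + x];
  cf [] x = x, cf (a # as) x = 1 / (a + cf as x).\<close>
fun cf :: "nat list \<Rightarrow> real \<Rightarrow> real" where
  "cf [] x = x"
| "cf (a # as) x = 1 / (real a + cf as x)"

text \<open>Birkhoff sum S_n phi at the point [a1,...,an + x]:
  sum over i < n of phi(T^i [a1,...,an+x]) = phi([a_{i+1},...,a_n + x]).\<close>
definition birkhoff_cf :: "(real \<Rightarrow> real) \<Rightarrow> nat list \<Rightarrow> real \<Rightarrow> real" where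
  "birkhoff_cf phi as x = (\<Sum>i<length as. phi (cf (drop i as) x))"

definition words :: "nat \<Rightarrow> nat list set" where
  "words n = {as. length as = n \<and> (\<forall>a\<in>set as. 1 \<le> a)}"

definition partition_sum :: "(real \<Rightarrow> real) \<Rightarrow> nat \<Rightarrow> ennreal" where
  "partition_sum phi n =
     (\<integral>\<^sup>+ as. (SUP x\<in>{0..<1::real}. ennreal (exp (birkhoff_cf phi as x))) \<partial>count_space (words n))"

definition ln_ennreal :: "ennreal \<Rightarrow> ereal" where
  "ln_ennreal z = (if z = \<infinity> then \<infinity> else if z = 0 then -\<infinity> else ereal (ln (enn2real z)))"

definition pressure :: "(real \<Rightarrow> real) \<Rightarrow> ereal" where
  "pressure phi = lim (\<lambda>n. ereal (1 / real n) * ln_ennreal (partition_sum phi n))"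

text \<open>g_1(s) = s, g_n(s) = s g_{n-1}(s) / (1 - s + n g_{n-1}(s)) for n >= 2 (g_0 unused).\<close>
fun g :: "nat \<Rightarrow> real \<Rightarrow> real" where
  "g 0 s = s"
| "g (Suc 0) s = s"
| "g (Suc (Suc n)) s =
     s * g (Suc n) s / (1 - s + real (Suc (Suc n)) * g (Suc n) s)"

definition lambda_d :: "nat \<Rightarrow> real \<Rightarrow> real" where
  "lambda_d d B = Inf {s. 0 \<le> s \<and>
      pressure (\<lambda>x. - s * ln (abs_gauss_deriv x) - g d s * ln B) \<le> 0}"

end

theory Submission
  imports Defs
begin

text \<open>Write q(w) for the denominator of the continued fraction with digit word w. Since
  |T'(x)| = x^(-2) and the points of the orbit of [a1,...,an + x] multiply to
  1 / (q(a1...an) + x q(a1...a(n-1))), the n-th partition sum of -s log|T'| - c is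
  e^(-nc) times the sum of q(w)^(-2s) over words of length n. The continuant inequalities
  q(u) q(v) <= q(uv) <= 2 q(u) q(v) make the logarithm of this sum additive up to a bounded error,
  so the pressure P(s) exists (Fekete). It is finite exactly for s > 1/2 (compare zeta(2s)), convex
  by Hoelder, of slope at most -ln 2 because q(w) >= 2^(|w|/2), zero at s = 1 because the lengths of
  the cylinders of each generation sum to 1, and unbounded as s tends to 1/2 (harmonic series).
  Hence lambda_d(B) is the unique zero in (1/2, 1) of the Bowen function P(s) - g_d(s) log B, which
  is strictly decreasing in s since g_d is positive and increasing on (0, 1] with g_d(1) = 1/d. The
  asserted properties of lambda_d follow from this and the continuity of the Bowen function in B.\<close>

section \<open>Almost additive sequences and sums of powers\<close>

definition almost_additive :: "real \<Rightarrow> (nat \<Rightarrow> real) \<Rightarrow> bool" where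
  "almost_additive c a \<longleftrightarrow> (\<forall>n m. a n + a m - c \<le> a (n + m) \<and> a (n + m) \<le> a n + a m)"

lemma almost_additive_mult_le:
  assumes "almost_additive c a"
  shows "a (Suc k * m) \<le> real (Suc k) * a m"
proof (induction k)
  case (Suc k)
  have "a (Suc (Suc k) * m) \<le> a m + a (Suc k * m)"
    using assms[unfolded almost_additive_def, rule_format, of m "Suc k * m"] by simp
  then show ?case using Suc by (simp add: algebra_simps)
qed simp

lemma almost_additive_mult_ge:
  assumes "almost_additive c a"
  shows "real (Suc k) * a n - real k * c \<le> a (Suc k * n)"
proof (induction k)
  case (Suc k)
  have "a n + a (Suc k * n) - c \<le> a (Suc (Suc k) * n)"
    using assms[unfolded almost_additive_def, rule_format, of n "Suc k * n"] by simp
  then show ?case using Suc by (simp add: algebra_simps)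
qed simp

lemma almost_additive_div_le:
  assumes a: "almost_additive c a" and "1 \<le> n" "1 \<le> m"
  shows "(a n - c) / real n \<le> a m / real m"
proof -
  obtain k where k: "m = Suc k" using assms(3) by (cases m) auto
  obtain l where l: "n = Suc l" using assms(2) by (cases n) auto
  have "real m * a n - real k * c \<le> real n * a m"
    using almost_additive_mult_ge[OF a, of k n] almost_additive_mult_le[OF a, of l m]
    by (simp add: k l mult.commute)
  moreover have "0 \<le> c"
    using a[unfolded almost_additive_def, rule_format, of 0 0] by simp
  ultimately have "(a n - c) * real m \<le> a m * real n"
    by (simp add: k algebra_simps)
  then show ?thesis
    using assms by (simp add: divide_simps)
qed

lemma almost_additive_le_INF:
  assumes "almost_additive c a" "1 \<le> n"
  shows "(a n - c) / real n \<le> (INF m\<in>{1..}. a m / real m)"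
  using almost_additive_div_le[OF assms] by (intro cINF_greatest) auto

lemma almost_additive_tendsto_INF:
  assumes a: "almost_additive c a"
  shows "(\<lambda>n. a n / real n) \<longlonglongrightarrow> (INF m\<in>{1..}. a m / real m)"
    (is "_ \<longlonglongrightarrow> ?L")
proof (rule tendsto_sandwich[of "\<lambda>n. ?L" _ _ "\<lambda>n. ?L + c / real n"])
  have "bdd_below ((\<lambda>m. a m / real m) ` {1..})"
    using almost_additive_div_le[OF a order_refl] by (intro bdd_belowI[of _ "a 1 - c"]) auto
  then show "eventually (\<lambda>n. ?L \<le> a n / real n) sequentially"
    by (intro eventually_sequentiallyI[of 1] cINF_lower) auto
  show "eventually (\<lambda>n. a n / real n \<le> ?L + c / real n) sequentially"
    using almost_additive_le_INF[OF a]
    by (intro eventually_sequentiallyI[of 1]) (auto simp: diff_divide_distrib algebra_simps)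
  have "(\<lambda>n. ?L + c / real n) \<longlonglongrightarrow> ?L + 0"
    by (intro tendsto_intros tendsto_divide_0[OF tendsto_const] filterlim_real_sequentially)
  then show "(\<lambda>n. ?L + c / real n) \<longlonglongrightarrow> ?L" by simp
qed simp

lemma nn_integral_powr_log_convex:
  fixes b :: "'a \<Rightarrow> real"
  assumes b: "\<And>w. w \<in> A \<Longrightarrow> 0 < b w"
    and s: "(\<integral>\<^sup>+w. ennreal (b w powr s) \<partial>count_space A) = ennreal (exp x)"
    and t: "(\<integral>\<^sup>+w. ennreal (b w powr t) \<partial>count_space A) = ennreal (exp y)"
    and \<theta>: "0 \<le> \<theta>" "\<theta> \<le> 1"
  shows "(\<integral>\<^sup>+w. ennreal (b w powr ((1 - \<theta>) * s + \<theta> * t)) \<partial>count_space A)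
    \<le> ennreal (exp ((1 - \<theta>) * x + \<theta> * y))"
proof -
  define K where "K = exp ((1 - \<theta>) * x + \<theta> * y)"
  define \<alpha> where "\<alpha> = K * (1 - \<theta>) / exp x"
  define \<beta> where "\<beta> = K * \<theta> / exp y"
  have "0 \<le> \<alpha>" "0 \<le> \<beta>" using \<theta> by (auto simp: \<alpha>_def \<beta>_def K_def)
  have young: "b w powr ((1 - \<theta>) * s + \<theta> * t) \<le> \<alpha> * b w powr s + \<beta> * b w powr t"
    if "w \<in> A" for w
  proof -
    have bw: "0 < b w" using b that .
    have "(b w powr s / exp x) powr (1 - \<theta>) * (b w powr t / exp y) powr \<theta>
        \<le> (1 - \<theta>) * (b w powr s / exp x) + \<theta> * (b w powr t / exp y)"
      using \<theta> bw by (intro Youngs_inequality_0) auto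
    also have "(b w powr s / exp x) powr (1 - \<theta>) * (b w powr t / exp y) powr \<theta>
        = b w powr (s * (1 - \<theta>)) * b w powr (t * \<theta>) / (exp (x * (1 - \<theta>)) * exp (y * \<theta>))"
      by (simp add: powr_divide powr_powr exp_powr_real)
    also have "\<dots> = b w powr ((1 - \<theta>) * s + \<theta> * t) / K"
      unfolding K_def powr_add[symmetric] exp_add[symmetric] by (simp add: algebra_simps)
    finally show ?thesis
      by (simp add: K_def \<alpha>_def \<beta>_def divide_le_eq algebra_simps)
  qed
  have "(\<integral>\<^sup>+w. ennreal (b w powr ((1 - \<theta>) * s + \<theta> * t)) \<partial>count_space A)
      \<le> (\<integral>\<^sup>+w. ennreal \<alpha> * ennreal (b w powr s) + ennreal \<beta> * ennreal (b w powr t) \<partial>count_space A)"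
    using young \<open>0 \<le> \<alpha>\<close> \<open>0 \<le> \<beta>\<close>
    by (intro nn_integral_mono) (simp add: ennreal_mult[symmetric] ennreal_plus[symmetric] ennreal_leI
        del: ennreal_plus)
  also have "\<dots> = ennreal \<alpha> * ennreal (exp x) + ennreal \<beta> * ennreal (exp y)"
    using s t by (simp add: nn_integral_add nn_integral_cmult)
  also have "\<dots> = ennreal (\<alpha> * exp x + \<beta> * exp y)"
    using \<open>0 \<le> \<alpha>\<close> \<open>0 \<le> \<beta>\<close>
    by (simp add: ennreal_mult[symmetric] ennreal_plus[symmetric] del: ennreal_plus)
  also have "\<alpha> * exp x + \<beta> * exp y = K"
    by (simp add: \<alpha>_def \<beta>_def field_simps)
  finally show ?thesis unfolding K_def .
qed

lemma sums_inverse_arith_prog_mult: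
  fixes a q :: real
  assumes "0 < a" "0 < q"
  shows "(\<lambda>i. 1 / ((a + real i * q) * (a + real (Suc i) * q))) sums (1 / (a * q))"
proof -
  define x where "x i = inverse (a + real i * q)" for i
  have "filterlim (\<lambda>i. a + real i * q) at_top sequentially"
    using assms by (intro filterlim_tendsto_add_at_top[OF tendsto_const]
        filterlim_at_top_mult_tendsto_pos[OF tendsto_const _ filterlim_real_sequentially]) auto
  then have "x \<longlonglongrightarrow> 0"
    unfolding x_def by (rule tendsto_inverse_0_at_top)
  then have "(\<lambda>i. (x i - x (Suc i)) / q) sums ((x 0 - 0) / q)"
    by (intro sums_divide telescope_sums')
  moreover have "(x i - x (Suc i)) / q = 1 / ((a + real i * q) * (a + real (Suc i) * q))" for i
  proof -
    define A where "A = a + real i * q"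
    define B where "B = a + real (Suc i) * q"
    have "0 \<le> real i * q" "0 \<le> real (Suc i) * q" using assms by simp_all
    then have "0 < A" "0 < B" using assms unfolding A_def B_def by linarith+
    moreover have "B - A = q" unfolding A_def B_def by (simp add: algebra_simps)
    ultimately have "(1 / A - 1 / B) / q = 1 / (A * B)"
      using assms by (simp add: diff_frac_eq)
    then show ?thesis
      by (simp add: x_def A_def B_def inverse_eq_divide)
  qed
  ultimately show ?thesis
    by (simp add: x_def inverse_eq_divide)
qed

lemma ln_enn2real_le:
  assumes "0 < z" "z \<le> ennreal (exp b)"
  shows "ln (enn2real z) \<le> b"
proof -
  obtain r where r: "z = ennreal r" "0 < r"
    using assms by (cases z) (auto simp: top_unique)
  then have "ln r \<le> ln (exp b)" using assms(2) by (subst ln_le_cancel_iff) auto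
  then show ?thesis using r by simp
qed

section \<open>Continuants\<close>

text \<open>For a word \<open>[a\<^sub>1, ..., a\<^sub>n]\<close>, \<open>cont_p\<close>/\<open>cont_q\<close> are the numerator and denominator
  \<open>p\<^sub>n\<close>, \<open>q\<^sub>n\<close> of its continued fraction, and \<open>cont_p_prev\<close>/\<open>cont_q_prev\<close> are \<open>p\<^sub>n\<^sub>-\<^sub>1\<close>,
  \<open>q\<^sub>n\<^sub>-\<^sub>1\<close>; all four recursions peel off the first digit (see \<open>cf_eq_cont\<close>).\<close>

fun cont_q :: "nat list \<Rightarrow> nat" and cont_p :: "nat list \<Rightarrow> nat" where
  "cont_q [] = 1"
| "cont_q (a # as) = a * cont_q as + cont_p as"
| "cont_p [] = 0"
| "cont_p (a # as) = cont_q as"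

fun cont_q_prev :: "nat list \<Rightarrow> nat" and cont_p_prev :: "nat list \<Rightarrow> nat" where
  "cont_q_prev [] = 0"
| "cont_q_prev (a # as) = a * cont_q_prev as + cont_p_prev as"
| "cont_p_prev [] = 1"
| "cont_p_prev (a # as) = cont_q_prev as"

definition pos_digits :: "nat list \<Rightarrow> bool" where
  "pos_digits as \<longleftrightarrow> (\<forall>a\<in>set as. 1 \<le> a)"

lemma pos_digits_simps [simp]:
  "pos_digits []"
  "pos_digits (a # as) \<longleftrightarrow> 1 \<le> a \<and> pos_digits as"
  "pos_digits (u @ v) \<longleftrightarrow> pos_digits u \<and> pos_digits v"
  by (auto simp: pos_digits_def)

lemma cont_p_le_cont_q: "pos_digits as \<Longrightarrow> cont_p as \<le> cont_q as"
  by (induction as) (auto simp: trans_le_add1)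

lemma cont_q_pos: "pos_digits as \<Longrightarrow> 1 \<le> cont_q as"
proof (induction as)
  case (Cons a as)
  then have "cont_q as \<le> a * cont_q as" by simp
  then show ?case using Cons by (simp add: trans_le_add1)
qed simp

lemma cont_prev_le:
  "pos_digits as \<Longrightarrow> as \<noteq> [] \<Longrightarrow> cont_q_prev as \<le> cont_q as \<and> cont_p_prev as \<le> cont_p as"
proof (induction as)
  case (Cons a as)
  then show ?case
    by (cases "as = []") (auto intro: add_mono)
qed simp

lemma cont_q_prev_le_cont_q: "pos_digits as \<Longrightarrow> cont_q_prev as \<le> cont_q as"
  by (cases "as = []") (auto dest: cont_prev_le)

lemma cont_append:
  "cont_q (u @ v) = cont_q u * cont_q v + cont_q_prev u * cont_p v"
  "cont_p (u @ v) = cont_p u * cont_q v + cont_p_prev u * cont_p v"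
  by (induction u) (auto simp: algebra_simps)

lemma cont_q_append_ge: "cont_q u * cont_q v \<le> cont_q (u @ v)"
  by (simp add: cont_append)

lemma cont_q_append_le:
  assumes "pos_digits u" "pos_digits v"
  shows "cont_q (u @ v) \<le> 2 * cont_q u * cont_q v"
proof -
  have "cont_q_prev u * cont_p v \<le> cont_q u * cont_q v"
    using assms cont_q_prev_le_cont_q cont_p_le_cont_q by (intro mult_le_mono)
  then show ?thesis by (simp add: cont_append)
qed

lemma cont_q_Cons_Cons_ge: "pos_digits (a # b # w) \<Longrightarrow> 2 * cont_q w \<le> cont_q (a # b # w)"
proof -
  assume digits: "pos_digits (a # b # w)"
  then have "cont_q w \<le> b * cont_q w + cont_p w" by (simp add: trans_le_add1)
  also have "\<dots> \<le> a * (b * cont_q w + cont_p w)" using digits by simp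
  finally show ?thesis by simp
qed

lemma two_pow_le_cont_q: "pos_digits w \<Longrightarrow> 2 ^ (length w div 2) \<le> cont_q w"
proof (induction w rule: induct_list012)
  case (2 x)
  then show ?case using cont_q_pos[of "[x]"] by simp
next
  case (3 x y zs)
  then show ?case using cont_q_Cons_Cons_ge[OF "3.prems"] by simp
qed simp

lemma cont_denom_pos: "pos_digits as \<Longrightarrow> 0 \<le> (x::real) \<Longrightarrow> 0 < real (cont_q as) + x * real (cont_q_prev as)"
  using cont_q_pos[of as] by (simp add: add_pos_nonneg)

lemma cf_eq_cont:
  assumes "pos_digits as" "0 \<le> (x::real)"
  shows "cf as x = (real (cont_p as) + x * real (cont_p_prev as)) /
                   (real (cont_q as) + x * real (cont_q_prev as))"
  using assms
proof (induction as)
  case (Cons a as)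
  define N where "N = real (cont_p as) + x * real (cont_p_prev as)"
  define D where "D = real (cont_q as) + x * real (cont_q_prev as)"
  have D: "0 < D" unfolding D_def using Cons.prems by (simp add: cont_denom_pos)
  have "0 \<le> N" using Cons.prems unfolding N_def by simp
  then have "0 < real a * D + N" using Cons.prems D by (simp add: add_pos_nonneg)
  moreover have "real a + cf as x = (real a * D + N) / D"
    using Cons D by (simp add: N_def D_def field_simps)
  ultimately have "cf (a # as) x = D / (real a * D + N)" using D by simp
  then show ?case unfolding N_def D_def by (simp add: algebra_simps)
qed simp

lemma cf_nonneg: "pos_digits as \<Longrightarrow> 0 \<le> (x::real) \<Longrightarrow> 0 \<le> cf as x"
  by (simp add: cf_eq_cont cont_denom_pos)

lemma cf_pos: "pos_digits as \<Longrightarrow> as \<noteq> [] \<Longrightarrow> 0 \<le> (x::real) \<Longrightarrow> 0 < cf as x"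
  by (cases as) (auto intro!: add_pos_nonneg cf_nonneg)

lemma prod_cf_drop:
  assumes "pos_digits as" "0 \<le> (x::real)"
  shows "(\<Prod>i<length as. cf (drop i as) x) = 1 / (real (cont_q as) + x * real (cont_q_prev as))"
  using assms
proof (induction as)
  case (Cons a as)
  have "(\<Prod>i<length (a # as). cf (drop i (a # as)) x) = cf (a # as) x * (\<Prod>i<length as. cf (drop i as) x)"
    by (simp only: length_Cons prod.lessThan_Suc_shift) simp
  also have "\<dots> = cf (a # as) x / (real (cont_q as) + x * real (cont_q_prev as))"
    using Cons by simp
  also have "\<dots> = 1 / (real (cont_q (a # as)) + x * real (cont_q_prev (a # as)))"
    using cf_eq_cont[OF Cons.prems] cont_denom_pos[OF Cons.prems] cont_denom_pos[of as x]
      cf_nonneg[of as x] Cons.prems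
    by (simp add: field_simps)
  finally show ?case .
qed simp

section \<open>Partition sums of the geometric potential\<close>

lemma words_eq: "words n = {as. length as = n \<and> pos_digits as}"
  by (auto simp: words_def pos_digits_def)

lemma countable_words: "countable (words n)"
  by (rule countableI_type)

lemma words_0: "words 0 = {[]}"
  by (auto simp: words_def)

lemma bij_betw_Suc_words_1: "bij_betw (\<lambda>i. [Suc i]) UNIV (words 1)"
proof (rule bij_betwI')
  fix y assume "y \<in> words 1"
  then obtain a where "y = [a]" "1 \<le> a" by (auto simp: words_def length_Suc_conv)
  then show "\<exists>x\<in>UNIV. y = [Suc x]" by (intro bexI[of _ "a - 1"]) auto
qed (auto simp: words_def)

lemma bij_betw_append_words:
  "bij_betw (\<lambda>(u, v). u @ v) (words n \<times> words m) (words (n + m))"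
proof (rule bij_betwI')
  fix y assume "y \<in> words (n + m)"
  then have "(take n y, drop n y) \<in> words n \<times> words m" "y = (case (take n y, drop n y) of (u, v) \<Rightarrow> u @ v)"
    by (auto simp: words_def dest: in_set_takeD in_set_dropD)
  then show "\<exists>x\<in>words n \<times> words m. y = (case x of (u, v) \<Rightarrow> u @ v)" by blast
next
  fix x y assume "x \<in> words n \<times> words m" "y \<in> words n \<times> words m"
  then show "((case x of (u, v) \<Rightarrow> u @ v) = (case y of (u, v) \<Rightarrow> u @ v)) = (x = y)"
    by (cases x; cases y) (auto simp: words_def append_eq_append_conv)
qed (auto simp: words_def)

lemma nn_integral_words_add:
  "(\<integral>\<^sup>+w. f w \<partial>count_space (words (n + m))) =
   (\<integral>\<^sup>+u. \<integral>\<^sup>+v. f (u @ v) \<partial>count_space (words m) \<partial>count_space (words n))"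
proof -
  have "(\<integral>\<^sup>+w. f w \<partial>count_space (words (n + m))) =
        (\<integral>\<^sup>+p. f (case p of (u, v) \<Rightarrow> u @ v) \<partial>count_space (words n \<times> words m))"
    by (rule nn_integral_bij_count_space[OF bij_betw_append_words, symmetric])
  also have "\<dots> = (\<integral>\<^sup>+p. f (case p of (u, v) \<Rightarrow> u @ v) \<partial>(count_space (words n) \<Otimes>\<^sub>M count_space (words m)))"
    by (simp add: pair_measure_countable countable_words)
  also have "\<dots> = (\<integral>\<^sup>+u. \<integral>\<^sup>+v. f (u @ v) \<partial>count_space (words m) \<partial>count_space (words n))"
    by (subst sigma_finite_measure.nn_integral_fst[symmetric])
       (simp_all add: sigma_finite_measure_count_space_countable pair_measure_countable countable_words)
  finally show ?thesis .
qed

definition q_sum :: "nat \<Rightarrow> real \<Rightarrow> ennreal" where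
  "q_sum n s = (\<integral>\<^sup>+w. ennreal (real (cont_q w) powr (-2 * s)) \<partial>count_space (words n))"

lemma birkhoff_cf_geometric_potential:
  fixes x :: real
  assumes w: "pos_digits w" and x: "0 \<le> x"
  shows "birkhoff_cf (\<lambda>y. - s * ln (abs_gauss_deriv y) - c) w x =
         -2 * s * ln (real (cont_q w) + x * real (cont_q_prev w)) - real (length w) * c"
proof -
  have pos: "0 < cf (drop i w) x" if "i < length w" for i
    using w that x by (intro cf_pos) (auto simp: pos_digits_def dest: in_set_dropD)
  have "birkhoff_cf (\<lambda>y. - s * ln (abs_gauss_deriv y) - c) w x =
        (\<Sum>i<length w. 2 * s * ln (cf (drop i w) x) - c)"
    unfolding birkhoff_cf_def abs_gauss_deriv_def
    by (intro sum.cong refl) (simp add: pos ln_div ln_realpow)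
  also have "\<dots> = 2 * s * (\<Sum>i<length w. ln (cf (drop i w) x)) - real (length w) * c"
    by (simp add: sum_subtractf sum_distrib_left)
  also have "(\<Sum>i<length w. ln (cf (drop i w) x)) = ln (\<Prod>i<length w. cf (drop i w) x)"
    by (subst ln_prod) (auto dest: pos)
  also have "\<dots> = - ln (real (cont_q w) + x * real (cont_q_prev w))"
    using prod_cf_drop[OF w x] cont_denom_pos[OF w x] by (simp add: ln_div)
  finally show ?thesis by simp
qed

lemma SUP_exp_birkhoff_cf:
  assumes w: "pos_digits w" and s: "0 \<le> s"
  shows "(SUP x\<in>{0..<1::real}. ennreal (exp (birkhoff_cf (\<lambda>y. - s * ln (abs_gauss_deriv y) - c) w x)))
       = ennreal (real (cont_q w) powr (-2 * s) * exp (- real (length w) * c))"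
    (is "(SUP x\<in>_. ?f x) = ?b")
proof -
  have f: "?f x = ennreal ((real (cont_q w) + x * real (cont_q_prev w)) powr (-2 * s) *
                           exp (- real (length w) * c))"
    if "0 \<le> x" for x :: real
    using cont_denom_pos[OF w that] unfolding birkhoff_cf_geometric_potential[OF w that]
    by (simp add: powr_def exp_diff exp_minus field_simps)
  show ?thesis
  proof (rule antisym)
    show "(SUP x\<in>{0..<1}. ?f x) \<le> ?b"
    proof (rule SUP_least)
      fix x :: real assume "x \<in> {0..<1}"
      then have x: "0 \<le> x" by simp
      have "(real (cont_q w) + x * real (cont_q_prev w)) powr (-2 * s) \<le> real (cont_q w) powr (-2 * s)"
        using s x cont_q_pos[OF w] by (intro powr_mono2') auto
      then show "?f x \<le> ?b"
        unfolding f[OF x] by (intro ennreal_leI mult_right_mono) auto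
    qed
    show "?b \<le> (SUP x\<in>{0..<1}. ?f x)"
    proof (rule SUP_upper2[of 0])
      show "?b \<le> ?f 0" unfolding f[OF order_refl] by simp
    qed simp
  qed
qed

lemma partition_sum_geometric_potential:
  assumes "0 \<le> s"
  shows "partition_sum (\<lambda>y. - s * ln (abs_gauss_deriv y) - c) n = ennreal (exp (- real n * c)) * q_sum n s"
proof -
  have "partition_sum (\<lambda>y. - s * ln (abs_gauss_deriv y) - c) n =
     (\<integral>\<^sup>+w. ennreal (real (cont_q w) powr (-2 * s)) * ennreal (exp (- real n * c)) \<partial>count_space (words n))"
    unfolding partition_sum_def
    by (intro nn_integral_cong, subst SUP_exp_birkhoff_cf) (auto simp: assms words_eq ennreal_mult)
  also have "\<dots> = q_sum n s * ennreal (exp (- real n * c))"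
    unfolding q_sum_def by (rule nn_integral_multc) simp
  finally show ?thesis by (simp add: mult.commute)
qed

lemma q_sum_0: "q_sum 0 s = 1"
  by (simp add: q_sum_def words_0 nn_integral_count_space_finite)

lemma q_sum_1: "q_sum 1 s = (\<Sum>i. ennreal (real (Suc i) powr (-2 * s)))"
proof -
  have "q_sum 1 s = (\<integral>\<^sup>+i. ennreal (real (cont_q [Suc i]) powr (-2 * s)) \<partial>count_space UNIV)"
    unfolding q_sum_def by (rule nn_integral_bij_count_space[OF bij_betw_Suc_words_1, symmetric])
  then show ?thesis
    by (simp add: nn_integral_count_space_nat del: of_nat_Suc)
qed

lemma q_sum_pos: "0 < q_sum n s"
proof -
  have ones: "replicate n 1 \<in> words n" by (auto simp: words_def)
  have "0 < ennreal (real (cont_q (replicate n 1)) powr (-2 * s))"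
    using cont_q_pos[of "replicate n 1"] by (simp add: pos_digits_def)
  also have "\<dots> \<le> q_sum n s"
    unfolding q_sum_def by (rule nn_integral_ge_point[OF ones])
  finally show ?thesis .
qed

lemma q_sum_mult:
  "q_sum n s * q_sum m s = (\<integral>\<^sup>+u. \<integral>\<^sup>+v. ennreal (real (cont_q u) powr (-2 * s)) *
      ennreal (real (cont_q v) powr (-2 * s)) \<partial>count_space (words m) \<partial>count_space (words n))"
  unfolding q_sum_def by (simp add: nn_integral_cmult nn_integral_multc)

lemma q_sum_add_le:
  assumes "0 \<le> s"
  shows "q_sum (n + m) s \<le> q_sum n s * q_sum m s"
proof -
  have "q_sum (n + m) s = (\<integral>\<^sup>+u. \<integral>\<^sup>+v. ennreal (real (cont_q (u @ v)) powr (-2 * s))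
      \<partial>count_space (words m) \<partial>count_space (words n))"
    unfolding q_sum_def by (rule nn_integral_words_add)
  also have "\<dots> \<le> q_sum n s * q_sum m s"
    unfolding q_sum_mult
  proof (intro nn_integral_mono)
    fix u v assume "u \<in> space (count_space (words n))" "v \<in> space (count_space (words m))"
    then have u: "pos_digits u" and v: "pos_digits v" by (auto simp: words_eq)
    have "real (cont_q (u @ v)) powr (-2 * s) \<le> (real (cont_q u) * real (cont_q v)) powr (-2 * s)"
      using cont_q_append_ge[of u v] cont_q_pos[OF u] cont_q_pos[OF v] assms
      by (intro powr_mono2') (auto simp flip: of_nat_mult)
    then show "ennreal (real (cont_q (u @ v)) powr (-2 * s)) \<le>
        ennreal (real (cont_q u) powr (-2 * s)) * ennreal (real (cont_q v) powr (-2 * s))"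
      by (simp add: powr_mult ennreal_mult[symmetric] ennreal_leI)
  qed
  finally show ?thesis .
qed

lemma q_sum_add_ge:
  assumes "0 \<le> s"
  shows "ennreal (2 powr (-2 * s)) * (q_sum n s * q_sum m s) \<le> q_sum (n + m) s"
proof -
  have "ennreal (2 powr (-2 * s)) * (q_sum n s * q_sum m s) =
      (\<integral>\<^sup>+u. \<integral>\<^sup>+v. ennreal (2 powr (-2 * s)) * (ennreal (real (cont_q u) powr (-2 * s)) *
        ennreal (real (cont_q v) powr (-2 * s))) \<partial>count_space (words m) \<partial>count_space (words n))"
    unfolding q_sum_mult by (simp add: nn_integral_cmult)
  also have "\<dots> \<le> (\<integral>\<^sup>+u. \<integral>\<^sup>+v. ennreal (real (cont_q (u @ v)) powr (-2 * s))
      \<partial>count_space (words m) \<partial>count_space (words n))"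
  proof (intro nn_integral_mono)
    fix u v assume "u \<in> space (count_space (words n))" "v \<in> space (count_space (words m))"
    then have u: "pos_digits u" and v: "pos_digits v" by (auto simp: words_eq)
    have "real (cont_q (u @ v)) \<le> real (2 * cont_q u * cont_q v)"
      using cont_q_append_le[OF u v] by (simp only: of_nat_le_iff)
    then have "(2 * real (cont_q u) * real (cont_q v)) powr (-2 * s) \<le> real (cont_q (u @ v)) powr (-2 * s)"
      using cont_q_pos[of "u @ v"] u v assms by (intro powr_mono2') auto
    then show "ennreal (2 powr (-2 * s)) * (ennreal (real (cont_q u) powr (-2 * s)) *
        ennreal (real (cont_q v) powr (-2 * s))) \<le> ennreal (real (cont_q (u @ v)) powr (-2 * s))"
      by (simp add: powr_mult ennreal_mult[symmetric] ennreal_leI)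
  qed
  also have "\<dots> = q_sum (n + m) s"
    unfolding q_sum_def by (rule nn_integral_words_add[symmetric])
  finally show ?thesis .
qed

lemma summable_Suc_powr: "1 / 2 < s \<Longrightarrow> summable (\<lambda>i. real (Suc i) powr (-2 * s))"
  using summable_Suc_iff[of "\<lambda>n. real n powr (-2 * s)"] summable_real_powr_iff[of "-2 * s"]
  by simp

lemma q_sum_finite: "1 / 2 < s \<Longrightarrow> q_sum n s < \<infinity>"
proof (induction n)
  case (Suc n)
  have "q_sum 1 s < \<infinity>"
    unfolding q_sum_1 using summable_Suc_powr[OF Suc.prems] by (subst suminf_ennreal2) auto
  moreover have "q_sum (1 + n) s \<le> q_sum 1 s * q_sum n s"
    using Suc.prems by (intro q_sum_add_le) auto
  ultimately show ?case
    using Suc by (simp add: ennreal_mult_less_top le_less_trans)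
qed (simp add: q_sum_0)

lemma q_sum_1_infinite:
  assumes "0 \<le> s" "s \<le> 1 / 2"
  shows "q_sum 1 s = \<infinity>"
proof -
  have "\<not> summable (\<lambda>i. inverse (real (Suc i)))"
    using not_summable_harmonic by (subst summable_Suc_iff[of "\<lambda>n. inverse (real n)"])
  then have "(\<Sum>i. ennreal (inverse (real (Suc i)))) = \<infinity>"
    using summable_suminf_not_top[of "\<lambda>i. inverse (real (Suc i))"] by fastforce
  then have "\<infinity> = (\<integral>\<^sup>+i. ennreal (inverse (real (Suc i))) \<partial>count_space UNIV)"
    by (simp only: nn_integral_count_space_nat)
  also have "\<dots> \<le> (\<integral>\<^sup>+i. ennreal (real (Suc i) powr (-2 * s)) \<partial>count_space UNIV)"
  proof (intro nn_integral_mono ennreal_leI)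
    fix i
    have "real (Suc i) powr (-1) \<le> real (Suc i) powr (-2 * s)"
      using assms by (intro powr_mono) auto
    then show "inverse (real (Suc i)) \<le> real (Suc i) powr (-2 * s)"
      by (simp add: powr_minus)
  qed
  also have "\<dots> = q_sum 1 s"
    by (simp only: q_sum_1 nn_integral_count_space_nat)
  finally show ?thesis by (simp add: top_unique)
qed

lemma q_sum_infinite:
  assumes "0 \<le> s" "s \<le> 1 / 2" "1 \<le> n"
  shows "q_sum n s = \<infinity>"
proof -
  obtain m where n: "n = 1 + m" using assms(3) by (cases n) auto
  have "ennreal (2 powr (-2 * s)) * (q_sum 1 s * q_sum m s) \<le> q_sum n s"
    unfolding n using assms by (intro q_sum_add_ge) auto
  moreover have "ennreal (2 powr (-2 * s)) * (q_sum 1 s * q_sum m s) = \<infinity>"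
    using q_sum_1_infinite[OF assms(1,2)] q_sum_pos[of m s] by (simp add: ennreal_mult_top ennreal_top_mult)
  ultimately show ?thesis by (simp add: top_unique)
qed

definition log_q_sum :: "nat \<Rightarrow> real \<Rightarrow> real" where
  "log_q_sum n s = ln (enn2real (q_sum n s))"

lemma q_sum_eq_exp: "1 / 2 < s \<Longrightarrow> q_sum n s = ennreal (exp (log_q_sum n s))"
  using q_sum_finite[of s n] q_sum_pos[of n s]
  by (cases "q_sum n s") (auto simp: log_q_sum_def enn2real_positive_iff)

section \<open>The pressure function\<close>

lemma almost_additive_log_q_sum:
  assumes s: "1 / 2 < s"
  shows "almost_additive (2 * s * ln 2) (\<lambda>n. log_q_sum n s)"
  unfolding almost_additive_def
proof (intro allI conjI)
  fix n m
  have "ennreal (exp (log_q_sum (n + m) s)) \<le> ennreal (exp (log_q_sum n s + log_q_sum m s))"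
    using q_sum_add_le[of s n m] s by (simp add: q_sum_eq_exp exp_add ennreal_mult)
  then show "log_q_sum (n + m) s \<le> log_q_sum n s + log_q_sum m s" by simp
  have "exp (log_q_sum n s + log_q_sum m s - 2 * s * ln 2)
      = 2 powr (-2 * s) * (exp (log_q_sum n s) * exp (log_q_sum m s))"
    by (simp add: powr_def algebra_simps flip: exp_add)
  then have "ennreal (exp (log_q_sum n s + log_q_sum m s - 2 * s * ln 2))
      = ennreal (2 powr (-2 * s)) * (q_sum n s * q_sum m s)"
    using s by (simp add: q_sum_eq_exp ennreal_mult)
  also have "\<dots> \<le> ennreal (exp (log_q_sum (n + m) s))"
    using q_sum_add_ge[of s n m] s by (simp add: q_sum_eq_exp)
  finally show "log_q_sum n s + log_q_sum m s - 2 * s * ln 2 \<le> log_q_sum (n + m) s" by simp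
qed

text \<open>Only meaningful for \<open>s > 1/2\<close>: for smaller \<open>s\<close> the sums diverge and \<open>log_q_sum n s\<close>
  is the junk value \<open>ln (enn2real \<infinity>) = 0\<close>.\<close>

definition gauss_pressure :: "real \<Rightarrow> real" where
  "gauss_pressure s = (INF n\<in>{1..}. log_q_sum n s / real n)"

lemma tendsto_gauss_pressure: "1 / 2 < s \<Longrightarrow> (\<lambda>n. log_q_sum n s / real n) \<longlonglongrightarrow> gauss_pressure s"
  unfolding gauss_pressure_def by (rule almost_additive_tendsto_INF[OF almost_additive_log_q_sum])

lemma gauss_pressure_ge: "1 / 2 < s \<Longrightarrow> log_q_sum 1 s - 2 * s * ln 2 \<le> gauss_pressure s"
  using almost_additive_le_INF[OF almost_additive_log_q_sum, of s 1] by (simp add: gauss_pressure_def)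

lemma pressure_geometric_potential:
  assumes s: "1 / 2 < s"
  shows "pressure (\<lambda>y. - s * ln (abs_gauss_deriv y) - C) = ereal (gauss_pressure s - C)"
proof -
  have eq: "ereal (1 / real n) * ln_ennreal (partition_sum (\<lambda>y. - s * ln (abs_gauss_deriv y) - C) n)
      = ereal (log_q_sum n s / real n - C)" if "1 \<le> n" for n
  proof -
    have "partition_sum (\<lambda>y. - s * ln (abs_gauss_deriv y) - C) n = ennreal (exp (- real n * C)) * q_sum n s"
      using s by (intro partition_sum_geometric_potential) simp
    also have "\<dots> = ennreal (exp (- real n * C) * exp (log_q_sum n s))"
      using s by (simp add: q_sum_eq_exp ennreal_mult)
    also have "exp (- real n * C) * exp (log_q_sum n s) = exp (- real n * C + log_q_sum n s)"
      by (rule exp_add[symmetric])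
    finally have "partition_sum (\<lambda>y. - s * ln (abs_gauss_deriv y) - C) n
        = ennreal (exp (- real n * C + log_q_sum n s))" .
    then have "ereal (1 / real n) * ln_ennreal (partition_sum (\<lambda>y. - s * ln (abs_gauss_deriv y) - C) n)
        = ereal ((- real n * C + log_q_sum n s) / real n)"
      by (simp add: ln_ennreal_def)
    also have "(- real n * C + log_q_sum n s) / real n = log_q_sum n s / real n - C"
      using that by (simp add: field_simps)
    finally show ?thesis .
  qed
  have "(\<lambda>n. ereal (log_q_sum n s / real n - C)) \<longlonglongrightarrow> ereal (gauss_pressure s - C)"
    by (intro tendsto_intros tendsto_gauss_pressure s)
  then have "(\<lambda>n. ereal (1 / real n) * ln_ennreal (partition_sum (\<lambda>y. - s * ln (abs_gauss_deriv y) - C) n))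
      \<longlonglongrightarrow> ereal (gauss_pressure s - C)"
    by (rule Lim_transform_eventually) (use eq in \<open>auto intro!: eventually_sequentiallyI[of 1]\<close>)
  then show ?thesis unfolding pressure_def by (rule limI)
qed

lemma pressure_geometric_potential_infinite:
  assumes "0 \<le> s" "s \<le> 1 / 2"
  shows "pressure (\<lambda>y. - s * ln (abs_gauss_deriv y) - C) = \<infinity>"
proof -
  have "ereal (1 / real n) * ln_ennreal (partition_sum (\<lambda>y. - s * ln (abs_gauss_deriv y) - C) n) = \<infinity>"
    if "1 \<le> n" for n
    using assms that
    by (subst partition_sum_geometric_potential) (simp_all add: q_sum_infinite ennreal_mult_top ln_ennreal_def)
  then have "(\<lambda>n. ereal (1 / real n) * ln_ennreal (partition_sum (\<lambda>y. - s * ln (abs_gauss_deriv y) - C) n))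
      \<longlonglongrightarrow> \<infinity>"
    by (intro Lim_transform_eventually[OF tendsto_const eventually_sequentiallyI[of 1]]) auto
  then show ?thesis unfolding pressure_def by (rule limI)
qed

lemma log_q_sum_diff_le:
  assumes s: "1 / 2 < s" and st: "s < t"
  shows "log_q_sum n t \<le> log_q_sum n s - 2 * (t - s) * real (n div 2) * ln 2"
proof -
  define K where "K = 2 powr (-2 * (t - s) * real (n div 2))"
  have le_K: "real (cont_q w) powr (-2 * t) \<le> K * real (cont_q w) powr (-2 * s)" if "w \<in> words n" for w
  proof -
    have w: "pos_digits w" "length w = n" using that by (auto simp: words_eq)
    have "real (2 ^ (n div 2)) \<le> real (cont_q w)"
      using two_pow_le_cont_q[OF w(1)] w(2) by (simp only: of_nat_le_iff)
    then have "real (cont_q w) powr (-2 * (t - s)) \<le> (2 powr real (n div 2)) powr (-2 * (t - s))"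
      using st by (intro powr_mono2') (auto simp: powr_realpow)
    also have "\<dots> = K" unfolding K_def by (simp add: powr_powr mult.commute)
    finally have "real (cont_q w) powr (-2 * (t - s)) * real (cont_q w) powr (-2 * s)
        \<le> K * real (cont_q w) powr (-2 * s)"
      by (rule mult_right_mono) simp
    then show ?thesis
      by (simp add: powr_add[symmetric] algebra_simps)
  qed
  have "q_sum n t \<le> (\<integral>\<^sup>+w. ennreal K * ennreal (real (cont_q w) powr (-2 * s)) \<partial>count_space (words n))"
    unfolding q_sum_def using le_K by (intro nn_integral_mono) (auto simp: K_def ennreal_mult[symmetric])
  also have "\<dots> = ennreal K * q_sum n s"
    unfolding q_sum_def by (rule nn_integral_cmult) simp
  finally have "exp (log_q_sum n t) \<le> K * exp (log_q_sum n s)"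
    using s st by (simp add: q_sum_eq_exp K_def ennreal_mult[symmetric])
  also have "\<dots> = exp (-2 * (t - s) * real (n div 2) * ln 2 + log_q_sum n s)"
    by (simp add: K_def powr_def exp_add)
  finally show ?thesis by (simp add: algebra_simps)
qed

lemma gauss_pressure_diff_le:
  assumes s: "1 / 2 < s" and st: "s < t"
  shows "gauss_pressure t \<le> gauss_pressure s - (t - s) * ln 2"
proof (rule LIMSEQ_le)
  show "(\<lambda>n. log_q_sum n t / real n) \<longlonglongrightarrow> gauss_pressure t"
    using s st by (intro tendsto_gauss_pressure) simp
  have "(\<lambda>n. log_q_sum n s / real n - (t - s) * ln 2 + (t - s) * ln 2 / real n)
      \<longlonglongrightarrow> gauss_pressure s - (t - s) * ln 2 + 0"
    by (intro tendsto_intros tendsto_gauss_pressure s tendsto_divide_0[OF tendsto_const]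
        filterlim_real_sequentially)
  then show "(\<lambda>n. log_q_sum n s / real n - (t - s) * ln 2 + (t - s) * ln 2 / real n)
      \<longlonglongrightarrow> gauss_pressure s - (t - s) * ln 2"
    by simp
  show "\<exists>N. \<forall>n\<ge>N. log_q_sum n t / real n
      \<le> log_q_sum n s / real n - (t - s) * ln 2 + (t - s) * ln 2 / real n"
  proof (intro exI allI impI)
    fix n :: nat assume n: "1 \<le> n"
    have "(t - s) * ln 2 * (real n - 1) \<le> (t - s) * ln 2 * (2 * real (n div 2))"
      using st by (intro mult_left_mono) auto
    then have "log_q_sum n t \<le> log_q_sum n s - (t - s) * ln 2 * (real n - 1)"
      using log_q_sum_diff_le[OF s st, of n] by (simp add: algebra_simps)
    then have "log_q_sum n t / real n \<le> (log_q_sum n s - (t - s) * ln 2 * (real n - 1)) / real n"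
      using n by (intro divide_right_mono) auto
    also have "\<dots> = log_q_sum n s / real n - (t - s) * ln 2 + (t - s) * ln 2 / real n"
      using n by (simp add: field_simps)
    finally show "log_q_sum n t / real n
        \<le> log_q_sum n s / real n - (t - s) * ln 2 + (t - s) * ln 2 / real n" .
  qed
qed

lemma gauss_pressure_strict_antimono:
  assumes "1 / 2 < s" "s < t"
  shows "gauss_pressure t < gauss_pressure s"
proof -
  have "0 < (t - s) * ln 2" using assms by simp
  then show ?thesis using gauss_pressure_diff_le[OF assms] by linarith
qed

lemma log_q_sum_convex:
  assumes s: "1 / 2 < s" and t: "1 / 2 < t" and \<theta>: "0 \<le> \<theta>" "\<theta> \<le> 1"
  shows "log_q_sum n ((1 - \<theta>) * s + \<theta> * t) \<le> (1 - \<theta>) * log_q_sum n s + \<theta> * log_q_sum n t"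
proof -
  have "-2 * ((1 - \<theta>) * s + \<theta> * t) = (1 - \<theta>) * (-2 * s) + \<theta> * (-2 * t)"
    by (simp add: algebra_simps)
  then have "q_sum n ((1 - \<theta>) * s + \<theta> * t)
      = (\<integral>\<^sup>+w. ennreal (real (cont_q w) powr ((1 - \<theta>) * (-2 * s) + \<theta> * (-2 * t))) \<partial>count_space (words n))"
    by (simp only: q_sum_def)
  also have "\<dots> \<le> ennreal (exp ((1 - \<theta>) * log_q_sum n s + \<theta> * log_q_sum n t))"
    using q_sum_eq_exp[OF s, of n] q_sum_eq_exp[OF t, of n] cont_q_pos \<theta>
    by (intro nn_integral_powr_log_convex) (auto simp: q_sum_def words_eq Suc_le_eq)
  finally show ?thesis
    unfolding log_q_sum_def by (intro ln_enn2real_le q_sum_pos)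
qed

lemma convex_on_gauss_pressure: "convex_on {1/2<..} gauss_pressure"
proof (rule convex_onI)
  fix \<theta> s t :: real assume \<theta>: "0 < \<theta>" "\<theta> < 1" and st: "s \<in> {1/2<..}" "t \<in> {1/2<..}"
  have "(1 - \<theta>) * s + \<theta> * t \<in> {1/2<..}"
    using convexD[OF convex_real_interval(3) st, of "1 - \<theta>" \<theta>] \<theta> by simp
  then have "(\<lambda>n. log_q_sum n ((1 - \<theta>) * s + \<theta> * t) / real n) \<longlonglongrightarrow> gauss_pressure ((1 - \<theta>) * s + \<theta> * t)"
    by (intro tendsto_gauss_pressure) simp
  moreover have "(\<lambda>n. (1 - \<theta>) * (log_q_sum n s / real n) + \<theta> * (log_q_sum n t / real n))
      \<longlonglongrightarrow> (1 - \<theta>) * gauss_pressure s + \<theta> * gauss_pressure t"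
    using st by (intro tendsto_intros tendsto_gauss_pressure) auto
  moreover have "log_q_sum n ((1 - \<theta>) * s + \<theta> * t) / real n
      \<le> (1 - \<theta>) * (log_q_sum n s / real n) + \<theta> * (log_q_sum n t / real n)" for n
  proof -
    have "log_q_sum n ((1 - \<theta>) * s + \<theta> * t) / real n
        \<le> ((1 - \<theta>) * log_q_sum n s + \<theta> * log_q_sum n t) / real n"
      using log_q_sum_convex[of s t \<theta> n] st \<theta> by (intro divide_right_mono) auto
    then show ?thesis by (simp add: add_divide_distrib)
  qed
  ultimately show "gauss_pressure ((1 - \<theta>) *\<^sub>R s + \<theta> *\<^sub>R t)
      \<le> (1 - \<theta>) * gauss_pressure s + \<theta> * gauss_pressure t"
    by (simp add: LIMSEQ_le)
qed (rule convex_real_interval)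

lemma continuous_on_gauss_pressure: "continuous_on {1/2<..} gauss_pressure"
  by (rule convex_on_continuous[OF open_greaterThan convex_on_gauss_pressure])

text \<open>Up to reversing the word, \<open>1 / (q (q + p))\<close> is the length of a cylinder set of the Gauss
  map, so these weights sum to 1 over every generation; the sum telescopes in the first digit.\<close>

definition cylinder_weight :: "nat list \<Rightarrow> real" where
  "cylinder_weight w = 1 / (real (cont_q w) * (real (cont_q w) + real (cont_p w)))"

lemma cylinder_weight_nonneg: "0 \<le> cylinder_weight w"
  by (simp add: cylinder_weight_def)

lemma sums_cylinder_weight_Cons:
  assumes v: "pos_digits v"
  shows "(\<lambda>i. cylinder_weight (Suc i # v)) sums cylinder_weight v"
proof -
  define q where "q = real (cont_q v)"
  define p where "p = real (cont_p v)"
  have "0 < q" unfolding q_def using cont_q_pos[OF v] by simp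
  then have "(\<lambda>i. 1 / ((q + p + real i * q) * (q + p + real (Suc i) * q))) sums (1 / ((q + p) * q))"
    by (intro sums_inverse_arith_prog_mult) (auto simp: p_def add_pos_nonneg)
  then show ?thesis
    by (simp add: cylinder_weight_def q_def p_def algebra_simps)
qed

lemma nn_integral_cylinder_weight:
  "(\<integral>\<^sup>+w. ennreal (cylinder_weight w) \<partial>count_space (words n)) = 1"
proof (induction n)
  case 0
  then show ?case by (simp add: words_0 nn_integral_count_space_finite cylinder_weight_def)
next
  case (Suc n)
  have first_digit: "(\<integral>\<^sup>+u. ennreal (cylinder_weight (u @ v)) \<partial>count_space (words 1))
      = ennreal (cylinder_weight v)"
    if "v \<in> words n" for v
  proof -
    have v: "pos_digits v" using that by (simp add: words_eq)
    have "(\<integral>\<^sup>+u. ennreal (cylinder_weight (u @ v)) \<partial>count_space (words 1))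
        = (\<integral>\<^sup>+i. ennreal (cylinder_weight ([Suc i] @ v)) \<partial>count_space UNIV)"
      by (rule nn_integral_bij_count_space[OF bij_betw_Suc_words_1, symmetric])
    also have "\<dots> = (\<Sum>i. ennreal (cylinder_weight (Suc i # v)))"
      by (simp add: nn_integral_count_space_nat)
    also have "\<dots> = ennreal (cylinder_weight v)"
      using sums_cylinder_weight_Cons[OF v]
      by (subst suminf_ennreal2) (auto simp: cylinder_weight_nonneg sums_iff)
    finally show ?thesis .
  qed
  have "(\<integral>\<^sup>+w. ennreal (cylinder_weight w) \<partial>count_space (words (1 + n))) =
        (\<integral>\<^sup>+v. \<integral>\<^sup>+u. ennreal (cylinder_weight (u @ v)) \<partial>count_space (words 1) \<partial>count_space (words n))"
    unfolding nn_integral_words_add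
    by (rule nn_integral_count_space_nn_integral) (simp_all add: countable_words)
  also have "\<dots> = (\<integral>\<^sup>+v. ennreal (cylinder_weight v) \<partial>count_space (words n))"
    by (intro nn_integral_cong first_digit) simp
  also have "\<dots> = 1"
    by (rule Suc.IH)
  finally show ?case by simp
qed

lemma cylinder_weight_le:
  assumes w: "pos_digits w"
  shows "cylinder_weight w \<le> real (cont_q w) powr (-2 * 1)"
    and "real (cont_q w) powr (-2 * 1) \<le> 2 * cylinder_weight w"
proof -
  define q where "q = real (cont_q w)"
  define p where "p = real (cont_p w)"
  have q: "1 \<le> q" unfolding q_def using cont_q_pos[OF w] by simp
  have p: "0 \<le> p" "p \<le> q" unfolding p_def q_def using cont_p_le_cont_q[OF w] by auto
  have powr: "real (cont_q w) powr (-2 * 1) = 1 / (q * q)"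
    unfolding q_def using q by (simp add: powr_minus powr_numeral power2_eq_square q_def divide_inverse)
  have weight: "cylinder_weight w = 1 / (q * (q + p))"
    unfolding cylinder_weight_def q_def p_def by simp
  have "0 < q * q" "0 < q * (q + p)" using q p by (simp_all add: add_pos_nonneg)
  moreover have "q * q \<le> q * (q + p)" "q * (q + p) \<le> 2 * (q * q)"
    using q p by (simp_all add: algebra_simps mult_left_mono)
  ultimately have "1 / (q * (q + p)) \<le> 1 / (q * q)" "2 / (2 * (q * q)) \<le> 2 / (q * (q + p))"
    by (intro divide_left_mono; simp)+
  then show "cylinder_weight w \<le> real (cont_q w) powr (-2 * 1)"
    and "real (cont_q w) powr (-2 * 1) \<le> 2 * cylinder_weight w"
    unfolding powr weight by simp_all
qed

lemma q_sum_1_bounds: "1 \<le> q_sum n 1" "q_sum n 1 \<le> 2"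
proof -
  have "1 = (\<integral>\<^sup>+w. ennreal (cylinder_weight w) \<partial>count_space (words n))"
    by (rule nn_integral_cylinder_weight[symmetric])
  also have "\<dots> \<le> q_sum n 1"
    unfolding q_sum_def using cylinder_weight_le(1)
    by (intro nn_integral_mono ennreal_leI) (auto simp: words_eq)
  finally show "1 \<le> q_sum n 1" .
  have "q_sum n 1 \<le> (\<integral>\<^sup>+w. ennreal 2 * ennreal (cylinder_weight w) \<partial>count_space (words n))"
    unfolding q_sum_def
  proof (intro nn_integral_mono)
    fix w assume "w \<in> space (count_space (words n))"
    then have "real (cont_q w) powr (-2 * 1) \<le> 2 * cylinder_weight w"
      using cylinder_weight_le(2) by (simp add: words_eq)
    then show "ennreal (real (cont_q w) powr (-2 * 1)) \<le> ennreal 2 * ennreal (cylinder_weight w)"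
      by (simp add: ennreal_mult[symmetric] cylinder_weight_nonneg ennreal_leI del: ennreal_numeral)
  qed
  also have "\<dots> = 2"
    by (simp add: nn_integral_cmult nn_integral_cylinder_weight)
  finally show "q_sum n 1 \<le> 2" .
qed

lemma gauss_pressure_1: "gauss_pressure 1 = 0"
proof -
  have bounds: "0 \<le> log_q_sum n 1" "log_q_sum n 1 \<le> ln 2" for n
  proof -
    have "ennreal 1 \<le> ennreal (exp (log_q_sum n 1))" "ennreal (exp (log_q_sum n 1)) \<le> ennreal 2"
      using q_sum_1_bounds[of n] by (simp_all add: q_sum_eq_exp)
    then have "1 \<le> exp (log_q_sum n 1)" "exp (log_q_sum n 1) \<le> 2"
      by (simp_all del: ennreal_numeral)
    then show "0 \<le> log_q_sum n 1" "log_q_sum n 1 \<le> ln 2"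
      using ln_le_cancel_iff[of "exp (log_q_sum n 1)" 2] by simp_all
  qed
  have "(\<lambda>n. log_q_sum n 1 / real n) \<longlonglongrightarrow> 0"
  proof (rule tendsto_sandwich[of "\<lambda>_. 0" _ _ "\<lambda>n. ln 2 / real n"])
    show "(\<lambda>n. ln 2 / real n) \<longlonglongrightarrow> 0"
      by (intro tendsto_divide_0[OF tendsto_const] filterlim_real_sequentially
          filterlim_at_top_imp_at_infinity)
    show "eventually (\<lambda>n. log_q_sum n 1 / real n \<le> ln 2 / real n) sequentially"
      using bounds by (intro always_eventually allI divide_right_mono) auto
  qed (use bounds in auto)
  then show ?thesis
    using tendsto_gauss_pressure[of 1] LIMSEQ_unique by auto
qed

lemma gauss_pressure_unbounded: "\<exists>s. 1 / 2 < s \<and> s < 1 \<and> M < gauss_pressure s"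
proof -
  define T where "T = exp (M + 2 * ln 2)"
  have "eventually (\<lambda>N. T < harm N) sequentially"
    using harm_at_top by (simp add: filterlim_at_top_dense)
  then obtain N where N: "T < harm N" by (auto simp: eventually_sequentially)
  define G where "G s = (\<Sum>i<N. real (Suc i) powr (-2 * s))" for s
  have "G (1 / 2) = harm N"
    unfolding G_def harm_altdef by (intro sum.cong refl) (simp add: powr_minus)
  moreover have "(G \<longlongrightarrow> G (1 / 2)) (at_right (1 / 2))"
    unfolding G_def by (intro tendsto_intros) auto
  ultimately have "eventually (\<lambda>s. T < G s) (at_right (1 / 2))"
    using N by (intro order_tendstoD(1)) auto
  then obtain b where b: "1 / 2 < b" "\<And>s. 1 / 2 < s \<Longrightarrow> s < b \<Longrightarrow> T < G s"
    unfolding eventually_at_right_field by auto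
  define s where "s = (1 / 2 + min b 1) / 2"
  have s: "1 / 2 < s" "s < 1" "s < b" using b unfolding s_def by auto
  have summable: "summable (\<lambda>i. real (Suc i) powr (-2 * s))"
    using s by (intro summable_Suc_powr)
  have "ennreal (exp (log_q_sum 1 s)) = q_sum 1 s"
    using s by (simp add: q_sum_eq_exp)
  also have "\<dots> = ennreal (\<Sum>i. real (Suc i) powr (-2 * s))"
    unfolding q_sum_1 by (intro suminf_ennreal2 summable) simp
  finally have "exp (log_q_sum 1 s) = (\<Sum>i. real (Suc i) powr (-2 * s))"
    using summable by (simp add: suminf_nonneg)
  moreover have "G s \<le> (\<Sum>i. real (Suc i) powr (-2 * s))"
    unfolding G_def by (rule sum_le_suminf[OF summable]) auto
  ultimately have "T < exp (log_q_sum 1 s)"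
    using b s by force
  then have "M + 2 * ln 2 < log_q_sum 1 s"
    unfolding T_def by simp
  moreover have "2 * s * ln 2 < 2 * ln 2" using s by simp
  ultimately have "M < gauss_pressure s"
    using gauss_pressure_ge[OF s(1)] by linarith
  then show ?thesis using s by blast
qed

lemma gauss_pressure_pos: "1 / 2 < s \<Longrightarrow> s < 1 \<Longrightarrow> 0 < gauss_pressure s"
  using gauss_pressure_strict_antimono[of s 1] by (simp add: gauss_pressure_1)

section \<open>The functions \<open>g\<^sub>d\<close>\<close>

text \<open>The reciprocal of \<open>g n s\<close> satisfies an affine recursion whose only division is by \<open>s\<close>, so
  positivity, monotonicity and continuity of \<open>g n\<close> on \<open>(0, 1]\<close> follow by induction.\<close>

fun g_recip :: "nat \<Rightarrow> real \<Rightarrow> real" where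
  "g_recip 0 s = 1 / s"
| "g_recip (Suc 0) s = 1 / s"
| "g_recip (Suc (Suc n)) s = ((1 - s) * g_recip (Suc n) s + real (Suc (Suc n))) / s"

lemma g_recip_pos: "0 < s \<Longrightarrow> s \<le> 1 \<Longrightarrow> 0 < g_recip n s"
proof (induction n s rule: g_recip.induct)
  case (3 n s)
  then have "0 < (1 - s) * g_recip (Suc n) s + real (Suc (Suc n))"
    by (intro add_nonneg_pos mult_nonneg_nonneg) auto
  then show ?case using 3 by simp
qed simp_all

lemma g_eq_inverse_g_recip: "0 < s \<Longrightarrow> s \<le> 1 \<Longrightarrow> g n s = 1 / g_recip n s"
proof (induction n s rule: g_recip.induct)
  case (3 n s)
  define h where "h = g_recip (Suc n) s"
  have h: "0 < h" unfolding h_def using g_recip_pos 3 by auto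
  have num: "0 < (1 - s) * h + real (Suc (Suc n))"
    using h 3 by (intro add_nonneg_pos mult_nonneg_nonneg) auto
  have "g (Suc (Suc n)) s = s * (1 / h) / (1 - s + real (Suc (Suc n)) * (1 / h))"
    using 3 by (simp add: h_def)
  also have "\<dots> = s / ((1 - s) * h + real (Suc (Suc n)))"
    using h num by (simp add: field_simps)
  finally show ?case
    using 3 num by (simp add: h_def)
qed simp_all

lemma g_recip_antimono: "0 < s \<Longrightarrow> s \<le> t \<Longrightarrow> t \<le> 1 \<Longrightarrow> g_recip n t \<le> g_recip n s"
proof (induction n s rule: g_recip.induct)
  case (3 n s)
  have ht: "0 < g_recip (Suc n) t" using g_recip_pos 3 by auto
  have "(1 - t) * g_recip (Suc n) t \<le> (1 - s) * g_recip (Suc n) s"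
    using 3 ht by (intro mult_mono) auto
  moreover have "0 \<le> (1 - t) * g_recip (Suc n) t + real (Suc (Suc n))"
    using 3 ht by (intro add_nonneg_nonneg mult_nonneg_nonneg) auto
  ultimately have "((1 - t) * g_recip (Suc n) t + real (Suc (Suc n))) / t
      \<le> ((1 - s) * g_recip (Suc n) s + real (Suc (Suc n))) / s"
    using 3 by (intro frac_le) auto
  then show ?case by simp
qed (simp_all add: frac_le)

lemma continuous_on_g_recip: "continuous_on {0<..1} (g_recip n)"
  by (induction n rule: induct_nat_012) (auto intro!: continuous_intros)

lemma g_recip_1: "1 \<le> n \<Longrightarrow> g_recip n 1 = real n"
  by (induction n rule: induct_nat_012) auto

lemma g_pos: "0 < s \<Longrightarrow> s \<le> 1 \<Longrightarrow> 0 < g n s"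
  by (simp add: g_eq_inverse_g_recip g_recip_pos)

lemma g_mono: "0 < s \<Longrightarrow> s \<le> t \<Longrightarrow> t \<le> 1 \<Longrightarrow> g n s \<le> g n t"
  using g_recip_antimono[of s t n] g_recip_pos[of s n] g_recip_pos[of t n]
  by (simp add: g_eq_inverse_g_recip frac_le)

lemma g_1: "1 \<le> n \<Longrightarrow> g n 1 = 1 / real n"
  by (simp add: g_eq_inverse_g_recip g_recip_1)

lemma continuous_on_g: "continuous_on {0<..1} (g n)"
proof -
  have "continuous_on {0<..1} (\<lambda>s. 1 / g_recip n s)"
    using g_recip_pos by (intro continuous_intros continuous_on_g_recip) (auto simp: less_imp_neq[symmetric])
  then show ?thesis
    by (rule continuous_on_cong[THEN iffD1, rotated 2]) (auto simp: g_eq_inverse_g_recip)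
qed

section \<open>The Bowen equation\<close>

definition bowen_fun :: "nat \<Rightarrow> real \<Rightarrow> real \<Rightarrow> real" where
  "bowen_fun d B s = gauss_pressure s - g d s * ln B"

lemma bowen_fun_strict_antimono:
  assumes "1 < B" "1 / 2 < s" "s < t" "t \<le> 1"
  shows "bowen_fun d B t < bowen_fun d B s"
proof -
  have "gauss_pressure t < gauss_pressure s"
    using assms by (intro gauss_pressure_strict_antimono)
  moreover have "g d s * ln B \<le> g d t * ln B"
    using assms by (intro mult_right_mono g_mono) auto
  ultimately show ?thesis unfolding bowen_fun_def by simp
qed

lemma continuous_on_bowen_fun:
  assumes "1 / 2 < a"
  shows "continuous_on {a..1} (bowen_fun d B)"
proof -
  have "continuous_on {a..1} gauss_pressure"
    using assms by (intro continuous_on_subset[OF continuous_on_gauss_pressure]) auto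
  moreover have "continuous_on {a..1} (g d)"
    using assms by (intro continuous_on_subset[OF continuous_on_g]) auto
  ultimately show ?thesis
    unfolding bowen_fun_def by (intro continuous_intros)
qed

lemma tendsto_bowen_fun: "0 < B \<Longrightarrow> ((\<lambda>B. bowen_fun d B s) \<longlongrightarrow> bowen_fun d B s) (at B within S)"
  unfolding bowen_fun_def by (intro tendsto_intros) auto

lemma bowen_fun_root_exists:
  assumes d: "1 \<le> d" and B: "1 < B"
  shows "\<exists>r. 1 / 2 < r \<and> r < 1 \<and> bowen_fun d B r = 0"
proof -
  obtain s where s: "1 / 2 < s" "s < 1" "ln B < gauss_pressure s"
    using gauss_pressure_unbounded by blast
  have "g d s \<le> g d 1" using s by (intro g_mono) auto
  also have "\<dots> \<le> 1" using d by (simp add: g_1)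
  finally have "g d s * ln B \<le> ln B" using B by (simp add: mult_le_cancel_right1)
  then have "0 \<le> bowen_fun d B s" using s unfolding bowen_fun_def by simp
  moreover have "bowen_fun d B 1 < 0"
    using d B by (simp add: bowen_fun_def gauss_pressure_1 g_1)
  ultimately obtain r where r: "s \<le> r" "r \<le> 1" "bowen_fun d B r = 0"
    using IVT2'[of "bowen_fun d B" 1 0 s] continuous_on_bowen_fun[OF s(1)] s by auto
  moreover have "r \<noteq> 1" using r \<open>bowen_fun d B 1 < 0\<close> by auto
  ultimately show ?thesis using s by (intro exI[of _ r]) auto
qed

lemma pressure_nonpos_iff_bowen_fun_nonpos:
  assumes "0 \<le> s"
  shows "pressure (\<lambda>x. - s * ln (abs_gauss_deriv x) - g d s * ln B) \<le> 0
    \<longleftrightarrow> 1 / 2 < s \<and> bowen_fun d B s \<le> 0"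
proof (cases "1 / 2 < s")
  case True
  then show ?thesis
    by (subst pressure_geometric_potential) (simp_all add: bowen_fun_def)
next
  case False
  then show ?thesis
    using assms by (subst pressure_geometric_potential_infinite) simp_all
qed

lemma lambda_d_eq_root:
  assumes B: "1 < B" and r: "1 / 2 < r" "r \<le> 1" "bowen_fun d B r = 0"
  shows "lambda_d d B = r"
  unfolding lambda_d_def
proof (rule cInf_eq_minimum)
  show "r \<in> {s. 0 \<le> s \<and> pressure (\<lambda>x. - s * ln (abs_gauss_deriv x) - g d s * ln B) \<le> 0}"
    using pressure_nonpos_iff_bowen_fun_nonpos[of r d B] r by simp
next
  fix s assume "s \<in> {s. 0 \<le> s \<and> pressure (\<lambda>x. - s * ln (abs_gauss_deriv x) - g d s * ln B) \<le> 0}"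
  then have s: "1 / 2 < s" "bowen_fun d B s \<le> 0"
    using pressure_nonpos_iff_bowen_fun_nonpos[of s d B] by auto
  show "r \<le> s"
  proof (rule ccontr)
    assume "\<not> r \<le> s"
    then have "bowen_fun d B r < bowen_fun d B s"
      using bowen_fun_strict_antimono[where d = d, OF B s(1), of r] r by simp
    then show False using s r by simp
  qed
qed

lemma lambda_d_root:
  assumes "1 \<le> d" "1 < B"
  shows "1 / 2 < lambda_d d B" "lambda_d d B < 1" "bowen_fun d B (lambda_d d B) = 0"
  using bowen_fun_root_exists[OF assms] lambda_d_eq_root[OF assms(2)] by force+

lemma less_lambda_d:
  assumes "1 \<le> d" "1 < B" "1 / 2 < s" "s \<le> 1" "0 < bowen_fun d B s"
  shows "s < lambda_d d B"
proof (rule ccontr)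
  assume "\<not> s < lambda_d d B"
  then have "bowen_fun d B s \<le> bowen_fun d B (lambda_d d B)"
    using bowen_fun_strict_antimono[of B "lambda_d d B" s d] lambda_d_root[OF assms(1,2)] assms
    by (cases "s = lambda_d d B") auto
  then show False using lambda_d_root[OF assms(1,2)] assms by simp
qed

lemma lambda_d_less:
  assumes "1 \<le> d" "1 < B" "1 / 2 < s" "s \<le> 1" "bowen_fun d B s < 0"
  shows "lambda_d d B < s"
proof (rule ccontr)
  assume "\<not> lambda_d d B < s"
  then have "bowen_fun d B (lambda_d d B) \<le> bowen_fun d B s"
    using bowen_fun_strict_antimono[of B s "lambda_d d B" d] lambda_d_root[OF assms(1,2)] assms
    by (cases "s = lambda_d d B") auto
  then show False using lambda_d_root[OF assms(1,2)] assms by simp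
qed

lemma lambda_d_strict_antimono:
  assumes d: "1 \<le> d" and B: "1 < B1" "B1 < B2"
  shows "lambda_d d B2 < lambda_d d B1"
proof -
  let ?r = "lambda_d d B1"
  have r: "1 / 2 < ?r" "?r < 1" "bowen_fun d B1 ?r = 0"
    using lambda_d_root[OF d B(1)] by auto
  have "g d ?r * ln B1 < g d ?r * ln B2"
    using B r g_pos[of ?r d] by simp
  then have "bowen_fun d B2 ?r < 0"
    using r unfolding bowen_fun_def by simp
  then show ?thesis
    using lambda_d_less[OF d _ r(1)] B r by simp
qed

lemma tendsto_lambda_d_at_right_1:
  assumes d: "1 \<le> d"
  shows "(lambda_d d \<longlongrightarrow> 1) (at_right 1)"
proof (rule order_tendstoI)
  fix a :: real assume "a < 1"
  define s where "s = max a (3 / 4)"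
  have s: "1 / 2 < s" "s < 1" "a \<le> s" using \<open>a < 1\<close> unfolding s_def by auto
  have "((\<lambda>B. bowen_fun d B s) \<longlongrightarrow> gauss_pressure s) (at_right 1)"
    using tendsto_bowen_fun[of 1 d s] by (simp add: bowen_fun_def)
  then have "eventually (\<lambda>B. 0 < bowen_fun d B s) (at_right 1)"
    using gauss_pressure_pos[OF s(1,2)] by (rule order_tendstoD(1))
  with eventually_at_right_less show "eventually (\<lambda>B. a < lambda_d d B) (at_right 1)"
    by eventually_elim (use less_lambda_d[OF d] s in force)
next
  fix a :: real assume "1 < a"
  show "eventually (\<lambda>B. lambda_d d B < a) (at_right 1)"
    using eventually_at_right_less by eventually_elim (use lambda_d_root[OF d] \<open>1 < a\<close> in force)
qed

lemma tendsto_lambda_d_at_top: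
  assumes d: "1 \<le> d"
  shows "(lambda_d d \<longlongrightarrow> 1 / 2) at_top"
proof (rule order_tendstoI)
  fix a :: real assume "a < 1 / 2"
  show "eventually (\<lambda>B. a < lambda_d d B) at_top"
    using eventually_gt_at_top[of 1]
    by eventually_elim (use lambda_d_root[OF d] \<open>a < 1 / 2\<close> in force)
next
  fix a :: real assume "1 / 2 < a"
  define s where "s = min ((a + 1 / 2) / 2) (3 / 4)"
  have s: "1 / 2 < s" "s < 1" "s < a" using \<open>1 / 2 < a\<close> unfolding s_def by (auto simp: min_def)
  have "eventually (\<lambda>B. gauss_pressure s / g d s < ln B) at_top"
    using ln_at_top by (simp add: filterlim_at_top_dense)
  with eventually_gt_at_top[of 1] show "eventually (\<lambda>B. lambda_d d B < a) at_top"
  proof eventually_elim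
    case (elim B)
    then have "bowen_fun d B s < 0"
      using g_pos[of s d] s by (simp add: bowen_fun_def field_simps)
    then show ?case using lambda_d_less[OF d elim(1) s(1)] s by simp
  qed
qed

lemma continuous_on_lambda_d:
  assumes d: "1 \<le> d"
  shows "continuous_on {1<..} (lambda_d d)"
  unfolding continuous_on_eq_continuous_at[OF open_greaterThan]
proof
  fix B0 :: real assume "B0 \<in> {1<..}"
  then have B0: "1 < B0" by simp
  let ?r = "lambda_d d B0"
  have r: "1 / 2 < ?r" "?r < 1" "bowen_fun d B0 ?r = 0"
    using lambda_d_root[OF d B0] by auto
  have near: "eventually (\<lambda>B. 1 < B) (at B0)"
    using B0 by (intro order_tendstoD(1)[OF tendsto_ident_at])
  show "isCont (lambda_d d) B0"
    unfolding continuous_at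
  proof (rule order_tendstoI)
    fix a assume "a < ?r"
    define s where "s = max a ((?r + 1 / 2) / 2)"
    have s: "1 / 2 < s" "s < ?r" "a \<le> s" using \<open>a < ?r\<close> r unfolding s_def by (auto simp: max_def)
    have "0 < bowen_fun d B0 s"
      using bowen_fun_strict_antimono[where d = d, OF B0 s(1,2)] r by simp
    then have "eventually (\<lambda>B. 0 < bowen_fun d B s) (at B0)"
      using B0 by (intro order_tendstoD(1)[OF tendsto_bowen_fun]) auto
    with near show "eventually (\<lambda>B. a < lambda_d d B) (at B0)"
      by eventually_elim (use less_lambda_d[OF d] s r in force)
  next
    fix a assume "?r < a"
    define s where "s = min ((?r + a) / 2) 1"
    have s: "?r < s" "s \<le> 1" "s < a" using \<open>?r < a\<close> r unfolding s_def by (auto simp: min_def)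
    have "bowen_fun d B0 s < 0"
      using bowen_fun_strict_antimono[where d = d, OF B0 r(1) s(1,2)] r by simp
    then have neg: "eventually (\<lambda>B. bowen_fun d B s < 0) (at B0)"
      using B0 by (intro order_tendstoD(2)[OF tendsto_bowen_fun]) auto
    have "1 / 2 < s" using r s by linarith
    show "eventually (\<lambda>B. lambda_d d B < a) (at B0)"
      using near neg by eventually_elim (use lambda_d_less[OF d] s \<open>1 / 2 < s\<close> in force)
  qed
qed

theorem proposition2p16:
  fixes d :: nat
  assumes "1 \<le> d"
  shows "continuous_on {1<..} (lambda_d d)
    \<and> (\<forall>B1 B2. 1 < B1 \<and> B1 < B2 \<longrightarrow> lambda_d d B2 < lambda_d d B1)
    \<and> (lambda_d d \<longlongrightarrow> 1) (at_right 1)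
    \<and> (lambda_d d \<longlongrightarrow> 1 / 2) at_top
    \<and> (\<forall>B>1. 1 / 2 \<le> lambda_d d B)"
  using continuous_on_lambda_d[OF assms] lambda_d_strict_antimono[OF assms]
    tendsto_lambda_d_at_right_1[OF assms] tendsto_lambda_d_at_top[OF assms]
    lambda_d_root(1)[OF assms]
  by (auto intro: less_imp_le)

end
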